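(* Fix $c>0$. Let $\varepsilon\mapsto E_\star(\varepsilon,c)\in\mathcal{E}_1$ be a differentiable map on an open interval $I\subseteq(0,\infty)$. Assume that for every $\varepsilon\in I$: - $E_\star(\varepsilon,c)$ is a minimizer of $F_{\varepsilon,c}$ over $\mathcal{E}_1$; - $\lambda_k$ and $\lambda_{k+1}$ of $L(W+\varepsilon E_\star(\varepsilon,c))$ are simple; - $G_{\varepsilon,c}(E_\star(\varepsilon,c))$ is a negative real multiple of $E_\star(\varepsilon,c)$. Let $\varphi_c(\varepsilon)=F_{\varepsilon,c}(E_\star(\varepsilon,c))$. Then for $\varepsilon\in I$, \[ \varphi_c'(\varepsilon)=\langle G_{\varepsilon,c}(E_\star(\varepsilon,c)),E_\star(\varepsilon,c)\rangle=-\|G_{\varepsilon,c}(E_\star(\varepsilon,c))\|_F . \]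
   Context: Let $\mathscr{E}\subseteq\{1,\dots,n\}^2$ be a symmetric edge set, and let $W=(w_{ij})\in\mathbb{R}^{n\times n}$ be symmetric, entrywise non-negative, with $w_{ij}=0$ for $(i,j)\notin\mathscr{E}$. Let $L(A)=\mathrm{diag}(A\mathbb{1})-A$ with $\mathbb{1}=(1,\dots,1)^T$. Eigenvalues are ordered $\lambda_1\le\dots\le\lambda_n$. The inner product is $\langle X,Y\rangle=\mathrm{trace}(X^TY)$ and $\|\cdot\|_F$ is the Frobenius norm. Let $\mathcal{S}=\{A: a_{ij}=0\ \forall (i,j)\notin\mathscr{E}\}$, with orthogonal projection $\Pi_{\mathcal{S}}$ (zeroing the entries outside $\mathscr{E}$). Let $\mathcal{E}=\mathcal{S}\cap\mathrm{Sym}(\mathbb{R}^{n\times n})$ and $\mathcal{E}_1=\{E\in\mathcal{E}:\|E\|_F=1\}$. Fix $k\in\{2,\dots,n-1\}$. For $\varepsilon>0$ and $E=(e_{ij})\in\mathcal{E}$ with $\lambda_k,\lambda_{k+1}$ of $L(W+\varepsilon E)$ simple, define the following objects. - $x$ and $y$ are unit eigenvectors for $\lambda_{k+1}$ and $\lambda_k$ respectively. - $F_\varepsilon(E)=\lambda_{k+1}(L(W+\varepsilon E))-\lambda_k(L(W+\varepsilon E))$. - $z=x\bullet x-y\bullet y$, the componentwise product. - $R_\varepsilon(E)=\tfrac12(z\mathbb{1}^T+\mathbb{1}z^T)-xx^T+yy^T$. - $G_\varepsilon(E)=\Pi_{\mathcal{S}}R_\varepsilon(E)$. - $Q_\varepsilon(E)=\tfrac12\sum_{(i,j)\in\mathscr{E}}(w_{ij}+\varepsilon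 e_{ij})_-^2$, where $(a)_-=\min(a,0)$. - $F_{\varepsilon,c}(E)=F_\varepsilon(E)+cQ_\varepsilon(E)$. - $G_{\varepsilon,c}(E)=G_\varepsilon(E)+c(W+\varepsilon E)_-$, where $(\cdot)_-$ is taken entrywise. *)

theory Defs
  imports "HOL-Analysis.Analysis" "HOL-Computational_Algebra.Polynomial"
begin

text \<open>Matrices are real n x n matrices indexed by a finite type 'n (n = CARD('n)).
  The inner product on real^'n^'n is trace(X^T Y) and its norm is the Frobenius norm.\<close>

definition ones :: "real ^ 'n" where "ones = (\<chi> i. 1)"

definition lap :: "real ^ 'n ^ 'n \<Rightarrow> real ^ 'n ^ 'n" where
  "lap A = (\<chi> i j. if i = j then (\<Sum>l\<in>UNIV. A $ i $ l) else 0) - A"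

definition charpoly :: "real ^ 'n ^ 'n \<Rightarrow> real poly" where
  "charpoly A = det (\<chi> i j. (if i = j then [:0, 1:] else 0) - [: A $ i $ j :])"

text \<open>Eigenvalues listed with algebraic multiplicity in nondecreasing order;
  eig A j is lambda_j (1-based).\<close>
definition eig :: "real ^ 'n ^ 'n \<Rightarrow> nat \<Rightarrow> real" where
  "eig A j = sorted_list_of_multiset (proots (charpoly A)) ! (j - 1)"

definition simple_eig :: "real ^ 'n ^ 'n \<Rightarrow> nat \<Rightarrow> bool" where
  "simple_eig A j \<longleftrightarrow> count (proots (charpoly A)) (eig A j) = 1"

text \<open>A unit eigenvector for eigenvalue mu (chosen; the objects below do not depend on the sign).\<close>
definition unit_eigvec :: "real ^ 'n ^ 'n \<Rightarrow> real \<Rightarrow> real ^ 'n" where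
  "unit_eigvec A mu = (SOME v. norm v = 1 \<and> A *v v = mu *\<^sub>R v)"

definition symmat :: "real ^ 'n ^ 'n \<Rightarrow> bool" where
  "symmat A \<longleftrightarrow> transpose A = A"

definition projS :: "('n \<times> 'n) set \<Rightarrow> real ^ 'n ^ 'n \<Rightarrow> real ^ 'n ^ 'n" where
  "projS Ed A = (\<chi> i j. if (i, j) \<in> Ed then A $ i $ j else 0)"

definition patt :: "('n \<times> 'n) set \<Rightarrow> (real ^ 'n ^ 'n) set" where
  "patt Ed = {A. (\<forall>i j. (i, j) \<notin> Ed \<longrightarrow> A $ i $ j = 0) \<and> symmat A}"

definition patt1 :: "('n \<times> 'n) set \<Rightarrow> (real ^ 'n ^ 'n) set" where
  "patt1 Ed = {A \<in> patt Ed. norm A = 1}"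

definition Feps :: "real ^ 'n ^ 'n \<Rightarrow> nat \<Rightarrow> real \<Rightarrow> real ^ 'n ^ 'n \<Rightarrow> real" where
  "Feps W k eps E = eig (lap (W + eps *\<^sub>R E)) (k + 1) - eig (lap (W + eps *\<^sub>R E)) k"

definition Rmat :: "real ^ 'n ^ 'n \<Rightarrow> nat \<Rightarrow> real \<Rightarrow> real ^ 'n ^ 'n \<Rightarrow> real ^ 'n ^ 'n" where
  "Rmat W k eps E =
     (let M = lap (W + eps *\<^sub>R E);
          x = unit_eigvec M (eig M (k + 1));
          y = unit_eigvec M (eig M k);
          z = (\<chi> i. x $ i * x $ i - y $ i * y $ i)
      in (\<chi> i j. (z $ i * ones $ j + ones $ i * z $ j) / 2 - x $ i * x $ j + y $ i * y $ j))"

definition Geps :: "('n \<times> 'n) set \<Rightarrow> real ^ 'n ^ 'n \<Rightarrow> nat \<Rightarrow> real \<Rightarrow> real ^ 'n ^ 'n \<Rightarrow> real ^ 'n ^ 'n" where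
  "Geps Ed W k eps E = projS Ed (Rmat W k eps E)"

definition Qeps :: "('n \<times> 'n) set \<Rightarrow> real ^ 'n ^ 'n \<Rightarrow> real \<Rightarrow> real ^ 'n ^ 'n \<Rightarrow> real" where
  "Qeps Ed W eps E = (1/2) * (\<Sum>(i, j)\<in>Ed. (min (W $ i $ j + eps * E $ i $ j) 0) ^ 2)"

definition Fepsc :: "('n \<times> 'n) set \<Rightarrow> real ^ 'n ^ 'n \<Rightarrow> nat \<Rightarrow> real \<Rightarrow> real \<Rightarrow> real ^ 'n ^ 'n \<Rightarrow> real" where
  "Fepsc Ed W k eps c E = Feps W k eps E + c * Qeps Ed W eps E"

definition Gepsc :: "('n \<times> 'n) set \<Rightarrow> real ^ 'n ^ 'n \<Rightarrow> nat \<Rightarrow> real \<Rightarrow> real \<Rightarrow> real ^ 'n ^ 'n \<Rightarrow> real ^ 'n ^ 'n" where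
  "Gepsc Ed W k eps c E = Geps Ed W k eps E
      + c *\<^sub>R (\<chi> i j. min (W $ i $ j + eps * E $ i $ j) 0)"

end

theory Submission
  imports Defs
begin

text \<open>Differentiate \<open>\<phi>\<^sub>c\<close> along the curve: the perturbation \<open>\<epsilon> E\<^sub>\<star>(\<epsilon>)\<close> of \<open>W\<close> has velocity
  \<open>E\<^sub>\<star> + \<epsilon> E\<^sub>\<star>'\<close>. Simple eigenvalues of a symmetric matrix curve are differentiable with derivative
  \<open>x\<^sup>T M' x\<close> (Hellmann--Feynman), and the Laplacian quadratic form is linear in the weights with
  gradient \<open>R\<^sub>\<epsilon>\<close>; together with the penalty term this gives
  \<open>\<phi>\<^sub>c' = \<langle>G\<^sub>\<epsilon>\<^sub>,\<^sub>c, E\<^sub>\<star> + \<epsilon> E\<^sub>\<star>'\<rangle>\<close>. Since \<open>E\<^sub>\<star>\<close> stays on the unit sphere of the pattern space,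
  \<open>E\<^sub>\<star>'\<close> is orthogonal to \<open>E\<^sub>\<star>\<close>, so \<open>G = \<mu> E\<^sub>\<star>\<close> gives \<open>\<phi>\<^sub>c' = \<langle>G, E\<^sub>\<star>\<rangle> = \<mu> = -\<parallel>G\<parallel>\<close>.
  The minimising property of \<open>E\<^sub>\<star>\<close> enters only through this multiplier condition.

  Differentiability of simple eigenvalues is built from an ordered orthonormal eigenbasis
  (successive Rayleigh minimisation), Weyl's inequality and the spectral gap, which together make
  the unit eigenvector depend continuously on the matrix.\<close>

section \<open>Spectral decomposition of symmetric matrices\<close>

lemma symmat_entry: "symmat A \<Longrightarrow> A $ i $ j = A $ j $ i"
  unfolding symmat_def by (metis transpose_def vec_lambda_beta)

lemma symmatI: "(\<And>i j. A $ i $ j = A $ j $ i) \<Longrightarrow> symmat A"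
  unfolding symmat_def transpose_def by (simp add: vec_eq_iff)

lemma symmat_inner_mult:
  fixes A :: "real^'n^'n"
  assumes "symmat A"
  shows "x \<bullet> (A *v y) = (A *v x) \<bullet> y"
  by (metis dot_lmul_matrix transpose_matrix_vector assms symmat_def inner_commute)

lemma exists_orthogonal_to_finite:
  fixes S :: "(real^'n) set"
  assumes "finite S" "card S < CARD('n)"
  obtains v where "v \<noteq> 0" "\<And>y. y \<in> S \<Longrightarrow> v \<bullet> y = 0"
proof -
  have "dim S < DIM(real^'n)"
    using dim_le_card'[OF assms(1)] assms(2) by simp
  then obtain v where "v \<noteq> 0" "\<And>y. y \<in> span S \<Longrightarrow> orthogonal v y"
    using orthogonal_to_subspace_exists by blast
  then show ?thesis
    using that by (auto simp: orthogonal_def span_base)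
qed

lemma quadratic_nonneg_imp_linear_coeff_zero:
  fixes b C :: real
  assumes "b \<ge> 0" and nonneg: "\<And>s. 0 \<le> 2 * s * b + s\<^sup>2 * C"
  shows "b = 0"
proof (rule ccontr)
  assume "b \<noteq> 0"
  with \<open>b \<ge> 0\<close> have b: "b > 0" by simp
  show False
  proof (cases "C \<le> 0")
    case True
    then show False using nonneg[of "-1"] b by simp
  next
    case False
    have "0 \<le> 2 * (- b / C) * b + (- b / C)\<^sup>2 * C" by (rule nonneg)
    also have "\<dots> = - (b * b / C)"
      using False by (simp add: field_simps power2_eq_square)
    finally show False
      using False mult_pos_pos[OF b b] by (simp add: divide_le_0_iff)
  qed
qed

lemma rayleigh_min_exists:
  fixes A :: "real^'n^'n"
  assumes S: "subspace S" and x0: "x0 \<in> S" "x0 \<noteq> 0"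
  obtains v where "v \<in> S" "norm v = 1"
    "\<And>x. x \<in> S \<Longrightarrow> (v \<bullet> (A *v v)) * (x \<bullet> x) \<le> x \<bullet> (A *v x)"
proof -
  define K where "K = S \<inter> sphere 0 1"
  have "compact K"
    unfolding K_def by (simp add: closed_subspace S closed_Int_compact)
  moreover have "x0 /\<^sub>R norm x0 \<in> K"
    using x0 S unfolding K_def by (simp add: subspace_scale)
  moreover have "continuous_on K (\<lambda>x. x \<bullet> (A *v x))"
    by (intro continuous_intros)
  ultimately obtain v where vK: "v \<in> K" and vmin: "\<And>y. y \<in> K \<Longrightarrow> v \<bullet> (A *v v) \<le> y \<bullet> (A *v y)"
    using continuous_attains_inf[of K] by blast
  have "(v \<bullet> (A *v v)) * (x \<bullet> x) \<le> x \<bullet> (A *v x)" if x: "x \<in> S" for x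
  proof (cases "x = 0")
    case False
    have "x /\<^sub>R norm x \<in> K"
      using x False S unfolding K_def by (simp add: subspace_scale)
    then have "v \<bullet> (A *v v) \<le> (x /\<^sub>R norm x) \<bullet> (A *v (x /\<^sub>R norm x))"
      using vmin by blast
    also have "\<dots> = (x \<bullet> (A *v x)) / (norm x)\<^sup>2"
      by (simp add: matrix_vector_mult_scaleR power2_eq_square divide_inverse)
    finally show ?thesis
      using False by (simp add: field_simps power2_norm_eq_inner)
  qed simp
  then show ?thesis
    using that vK unfolding K_def by auto
qed

text \<open>The residual \<open>w = A v - \<mu> v\<close> lies in \<open>S\<close> and is orthogonal to \<open>v\<close>; minimality along
  the line \<open>v + s w\<close> leaves no room for a linear term \<open>2 s |w|\<^sup>2\<close>.\<close>
lemma rayleigh_min_eigenvector: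
  fixes A :: "real^'n^'n"
  assumes A: "symmat A" and S: "subspace S" and inv: "\<And>x. x \<in> S \<Longrightarrow> A *v x \<in> S"
    and v: "v \<in> S" "norm v = 1"
    and vmin: "\<And>x. x \<in> S \<Longrightarrow> (v \<bullet> (A *v v)) * (x \<bullet> x) \<le> x \<bullet> (A *v x)"
  shows "A *v v = (v \<bullet> (A *v v)) *\<^sub>R v"
proof -
  define \<mu> where "\<mu> = v \<bullet> (A *v v)"
  define w where "w = A *v v - \<mu> *\<^sub>R v"
  have vv: "v \<bullet> v = 1" using v by (simp add: dot_square_norm)
  have wS: "w \<in> S" unfolding w_def using inv v S by (simp add: subspace_diff subspace_scale)
  have vw: "v \<bullet> w = 0" unfolding w_def \<mu>_def by (simp add: inner_diff_right vv)
  have wAv: "w \<bullet> (A *v v) = w \<bullet> w"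
    using vw unfolding w_def by (simp add: inner_diff_right inner_diff_left inner_commute)
  have "0 \<le> 2 * s * (w \<bullet> w) + s\<^sup>2 * (w \<bullet> (A *v w) - \<mu> * (w \<bullet> w))" for s
  proof -
    have "v + s *\<^sub>R w \<in> S" using v wS S by (simp add: subspace_add subspace_scale)
    then have "\<mu> * ((v + s *\<^sub>R w) \<bullet> (v + s *\<^sub>R w)) \<le> (v + s *\<^sub>R w) \<bullet> (A *v (v + s *\<^sub>R w))"
      using vmin unfolding \<mu>_def by blast
    moreover have "v \<bullet> (A *v w) = w \<bullet> (A *v v)"
      using symmat_inner_mult[OF A, of v w] by (simp add: inner_commute)
    ultimately show ?thesis
      using vv vw wAv unfolding \<mu>_def
      by (simp add: matrix_vector_right_distrib matrix_vector_mult_scaleR inner_add_left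
          inner_add_right inner_commute power2_eq_square algebra_simps)
  qed
  then have "w \<bullet> w = 0"
    by (intro quadratic_nonneg_imp_linear_coeff_zero) simp_all
  then show ?thesis unfolding w_def \<mu>_def by simp
qed

text \<open>The first \<open>m\<close> steps of successive Rayleigh minimisation; the last conjunct is the
  Courant--Fischer characterisation of \<open>a i\<close>, which forces the eigenvalues to come out in
  increasing order.\<close>
definition rayleigh_eigenbasis :: "real^'n^'n \<Rightarrow> nat \<Rightarrow> (nat \<Rightarrow> real^'n) \<Rightarrow> (nat \<Rightarrow> real) \<Rightarrow> bool" where
  "rayleigh_eigenbasis A m u a \<longleftrightarrow>
     (\<forall>i<m. norm (u i) = 1 \<and> A *v u i = a i *\<^sub>R u i)
     \<and> (\<forall>i<m. \<forall>l<m. i \<noteq> l \<longrightarrow> u i \<bullet> u l = 0)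
     \<and> (\<forall>i l. i \<le> l \<longrightarrow> l < m \<longrightarrow> a i \<le> a l)
     \<and> (\<forall>i<m. \<forall>x. (\<forall>l<i. x \<bullet> u l = 0) \<longrightarrow> a i * (x \<bullet> x) \<le> x \<bullet> (A *v x))"

definition ordered_eigenbasis :: "real^'n^'n \<Rightarrow> (nat \<Rightarrow> real^'n) \<Rightarrow> (nat \<Rightarrow> real) \<Rightarrow> bool" where
  "ordered_eigenbasis A u a \<longleftrightarrow>
     (\<forall>i<CARD('n). norm (u i) = 1 \<and> A *v u i = a i *\<^sub>R u i)
     \<and> (\<forall>i<CARD('n). \<forall>l<CARD('n). i \<noteq> l \<longrightarrow> u i \<bullet> u l = 0)
     \<and> (\<forall>i l. i \<le> l \<longrightarrow> l < CARD('n) \<longrightarrow> a i \<le> a l)"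

lemma rayleigh_min_orthogonal_eigvec:
  fixes A :: "real^'n^'n"
  assumes A: "symmat A" and m: "m < CARD('n)" and eigen: "\<forall>l<m. A *v u l = a l *\<^sub>R u l"
  obtains v \<mu> where "norm v = 1" "A *v v = \<mu> *\<^sub>R v" "\<forall>l<m. v \<bullet> u l = 0"
    "\<And>x. \<forall>l<m. x \<bullet> u l = 0 \<Longrightarrow> \<mu> * (x \<bullet> x) \<le> x \<bullet> (A *v x)"
proof -
  define S where "S = {x. \<forall>l<m. x \<bullet> u l = 0}"
  have S: "subspace S" unfolding S_def subspace_def by (auto simp: inner_add_left)
  have "card (u ` {..<m}) < CARD('n)"
    using card_image_le[of "{..<m}" u] m by simp
  then obtain x0 where x0: "x0 \<noteq> 0" "\<And>y. y \<in> u ` {..<m} \<Longrightarrow> x0 \<bullet> y = 0"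
    using exists_orthogonal_to_finite[of "u ` {..<m}"] by blast
  have x0S: "x0 \<in> S" using x0(2) unfolding S_def by simp
  have inv: "A *v x \<in> S" if "x \<in> S" for x
  proof -
    have "(A *v x) \<bullet> u l = a l * (x \<bullet> u l)" if "l < m" for l
      using symmat_inner_mult[OF A, of x "u l"] eigen that by simp
    then show ?thesis using \<open>x \<in> S\<close> unfolding S_def by simp
  qed
  obtain v where v: "v \<in> S" "norm v = 1"
      and vmin: "\<And>x. x \<in> S \<Longrightarrow> (v \<bullet> (A *v v)) * (x \<bullet> x) \<le> x \<bullet> (A *v x)"
    using rayleigh_min_exists[OF S x0S x0(1)] by blast
  have "A *v v = (v \<bullet> (A *v v)) *\<^sub>R v"
    by (rule rayleigh_min_eigenvector[OF A S inv v vmin])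
  with v vmin show ?thesis
    using that unfolding S_def by simp
qed

lemma rayleigh_eigenbasis_Suc:
  fixes A :: "real^'n^'n"
  assumes A: "symmat A" and m: "m < CARD('n)" and R: "rayleigh_eigenbasis A m u a"
  shows "\<exists>u' a'. rayleigh_eigenbasis A (Suc m) u' a'"
proof -
  have eigen: "\<forall>i<m. norm (u i) = 1 \<and> A *v u i = a i *\<^sub>R u i"
     and orth: "\<forall>i<m. \<forall>l<m. i \<noteq> l \<longrightarrow> u i \<bullet> u l = 0"
     and mono: "\<forall>i l. i \<le> l \<longrightarrow> l < m \<longrightarrow> a i \<le> a l"
     and minimal: "\<forall>i<m. \<forall>x. (\<forall>l<i. x \<bullet> u l = 0) \<longrightarrow> a i * (x \<bullet> x) \<le> x \<bullet> (A *v x)"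
    using R unfolding rayleigh_eigenbasis_def by auto
  obtain v \<mu> where v: "norm v = 1" "A *v v = \<mu> *\<^sub>R v" and vu: "\<forall>l<m. v \<bullet> u l = 0"
    and vmin: "\<And>x. \<forall>l<m. x \<bullet> u l = 0 \<Longrightarrow> \<mu> * (x \<bullet> x) \<le> x \<bullet> (A *v x)"
    using rayleigh_min_orthogonal_eigvec[OF A m] eigen by blast
  have a_le: "a i \<le> \<mu>" if "i < m" for i
  proof -
    have "a i * (v \<bullet> v) \<le> v \<bullet> (A *v v)" using minimal that vu by simp
    then show ?thesis using v by (simp add: dot_square_norm)
  qed
  define u' where "u' = u(m := v)"
  define a' where "a' = a(m := \<mu>)"
  have "\<forall>i<Suc m. norm (u' i) = 1 \<and> A *v u' i = a' i *\<^sub>R u' i"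
    using eigen v unfolding u'_def a'_def by (auto simp: less_Suc_eq)
  moreover have "\<forall>i<Suc m. \<forall>l<Suc m. i \<noteq> l \<longrightarrow> u' i \<bullet> u' l = 0"
    using orth vu unfolding u'_def by (auto simp: less_Suc_eq inner_commute)
  moreover have "\<forall>i l. i \<le> l \<longrightarrow> l < Suc m \<longrightarrow> a' i \<le> a' l"
    using mono a_le unfolding a'_def by (auto simp: less_Suc_eq)
  moreover have "a' i * (x \<bullet> x) \<le> x \<bullet> (A *v x)" if i: "i < Suc m" and x: "\<forall>l<i. x \<bullet> u' l = 0" for i x
  proof (cases "i = m")
    case True
    have "\<forall>l<m. x \<bullet> u l = 0"
      using x True unfolding u'_def by (metis fun_upd_other less_irrefl_nat)
    then show ?thesis using vmin True unfolding a'_def by simp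
  next
    case False
    with i have "i < m" by simp
    moreover have "\<forall>l<i. x \<bullet> u l = 0"
      using x \<open>i < m\<close> unfolding u'_def by (metis fun_upd_other less_trans less_irrefl_nat)
    ultimately have "a i * (x \<bullet> x) \<le> x \<bullet> (A *v x)"
      using minimal by blast
    then show ?thesis using False unfolding a'_def by simp
  qed
  ultimately have "rayleigh_eigenbasis A (Suc m) u' a'"
    unfolding rayleigh_eigenbasis_def by blast
  then show ?thesis by blast
qed

lemma ordered_eigenbasis_exists:
  fixes A :: "real^'n^'n"
  assumes A: "symmat A"
  obtains u a where "ordered_eigenbasis A u a"
proof -
  have "m \<le> CARD('n) \<Longrightarrow> \<exists>u a. rayleigh_eigenbasis A m u a" for m
  proof (induction m)
    case 0
    show ?case unfolding rayleigh_eigenbasis_def by simp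
  next
    case (Suc m)
    then show ?case using rayleigh_eigenbasis_Suc[OF A] by (metis Suc_le_lessD less_imp_le_nat)
  qed
  then obtain u a where "rayleigh_eigenbasis A CARD('n) u a" by blast
  then have "ordered_eigenbasis A u a"
    unfolding rayleigh_eigenbasis_def ordered_eigenbasis_def by (elim conjE) (intro conjI)
  then show ?thesis by (rule that)
qed

lemma ordered_eigenbasis_orthogonal_matrix:
  fixes A :: "real^'n^'n"
  assumes E: "ordered_eigenbasis A u a"
  obtains \<tau> :: "'n \<Rightarrow> nat" where "bij_betw \<tau> UNIV {..<CARD('n)}"
    "transpose (\<chi> r c. u (\<tau> c) $ r) ** (\<chi> r c. u (\<tau> c) $ r) = mat 1"
proof -
  obtain \<sigma> :: "nat \<Rightarrow> 'n" where "bij_betw \<sigma> {0..<CARD('n)} UNIV"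
    using ex_bij_betw_nat_finite[of "UNIV :: 'n set"] by auto
  define \<tau> where "\<tau> = inv_into {..<CARD('n)} \<sigma>"
  have \<tau>: "bij_betw \<tau> UNIV {..<CARD('n)}"
    unfolding \<tau>_def using bij_betw_inv_into \<open>bij_betw \<sigma> _ _\<close> by (simp add: atLeast0LessThan)
  have "u (\<tau> c) \<bullet> u (\<tau> c') = mat 1 $ c $ c'" for c c'
  proof -
    have "\<tau> c < CARD('n)" "\<tau> c' < CARD('n)" "\<tau> c = \<tau> c' \<longleftrightarrow> c = c'"
      using \<tau> unfolding bij_betw_def inj_def by auto
    then show ?thesis
      using E unfolding ordered_eigenbasis_def by (auto simp: mat_def dot_square_norm)
  qed
  then have "transpose (\<chi> r c. u (\<tau> c) $ r) ** (\<chi> r c. u (\<tau> c) $ r) = mat 1"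
    by (simp add: vec_eq_iff matrix_matrix_mult_def transpose_def inner_vec_def)
  with \<tau> show ?thesis by (rule that)
qed

lemma ordered_eigenbasis_expansion:
  fixes A :: "real^'n^'n"
  assumes E: "ordered_eigenbasis A u a"
  shows "x = (\<Sum>i<CARD('n). (x \<bullet> u i) *\<^sub>R u i)"
proof -
  obtain \<tau> :: "'n \<Rightarrow> nat" where \<tau>: "bij_betw \<tau> UNIV {..<CARD('n)}"
    and QQ: "transpose (\<chi> r c. u (\<tau> c) $ r) ** (\<chi> r c. u (\<tau> c) $ r) = mat 1"
    using ordered_eigenbasis_orthogonal_matrix[OF E] by blast
  define Q where "Q = (\<chi> r c. u (\<tau> c) $ r)"
  have "Q ** transpose Q = mat 1"
    using QQ matrix_left_right_inverse unfolding Q_def by blast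
  then have "x = Q *v (transpose Q *v x)"
    by (metis matrix_vector_mul_assoc matrix_vector_mul_lid)
  also have "\<dots> = (\<Sum>c\<in>UNIV. (x \<bullet> u (\<tau> c)) *\<^sub>R u (\<tau> c))"
    by (simp add: vec_eq_iff Q_def matrix_vector_mult_def transpose_def sum_component
        inner_vec_def mult.commute)
  also have "\<dots> = (\<Sum>i<CARD('n). (x \<bullet> u i) *\<^sub>R u i)"
    by (rule sum.reindex_bij_betw[OF \<tau>])
  finally show ?thesis .
qed

lemma ordered_eigenbasis_parseval:
  fixes A :: "real^'n^'n"
  assumes E: "ordered_eigenbasis A u a"
  shows "x \<bullet> x = (\<Sum>i<CARD('n). (x \<bullet> u i)\<^sup>2)"
  by (subst (2) ordered_eigenbasis_expansion[OF E])
    (simp add: inner_sum_right power2_eq_square)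

lemma ordered_eigenbasis_quadratic_form:
  fixes A :: "real^'n^'n"
  assumes A: "symmat A" and E: "ordered_eigenbasis A u a"
  shows "x \<bullet> (A *v x) = (\<Sum>i<CARD('n). a i * (x \<bullet> u i)\<^sup>2)"
proof -
  have "x \<bullet> (A *v x) = (A *v x) \<bullet> (\<Sum>i<CARD('n). (x \<bullet> u i) *\<^sub>R u i)"
    using ordered_eigenbasis_expansion[OF E, of x] by (simp add: inner_commute)
  also have "\<dots> = (\<Sum>i<CARD('n). (x \<bullet> u i) * (x \<bullet> (A *v u i)))"
    by (simp add: inner_sum_right symmat_inner_mult[OF A])
  also have "\<dots> = (\<Sum>i<CARD('n). a i * (x \<bullet> u i)\<^sup>2)"
    using E unfolding ordered_eigenbasis_def by (intro sum.cong) (simp_all add: power2_eq_square)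
  finally show ?thesis .
qed

lemma ordered_eigenbasis_det:
  fixes A :: "real^'n^'n"
  assumes E: "ordered_eigenbasis A u a"
  shows "det (s *\<^sub>R mat 1 - A) = (\<Prod>i<CARD('n). s - a i)"
proof -
  obtain \<tau> :: "'n \<Rightarrow> nat" where \<tau>: "bij_betw \<tau> UNIV {..<CARD('n)}"
    and QQ: "transpose (\<chi> r c. u (\<tau> c) $ r) ** (\<chi> r c. u (\<tau> c) $ r) = mat 1"
    using ordered_eigenbasis_orthogonal_matrix[OF E] by blast
  define Q where "Q = (\<chi> r c. u (\<tau> c) $ r)"
  define B where "B = s *\<^sub>R mat 1 - A"
  have Bu: "B *v u i = (s - a i) *\<^sub>R u i" if "i < CARD('n)" for i
    using E that unfolding B_def ordered_eigenbasis_def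
    by (simp add: matrix_vector_mult_diff_rdistrib scaleR_diff_left flip: scaleR_matrix_vector_assoc)
  have "(transpose Q ** (B ** Q)) $ c $ c' = (if c = c' then s - a (\<tau> c) else 0)" for c c'
  proof -
    have "\<tau> c < CARD('n)" "\<tau> c' < CARD('n)" "\<tau> c = \<tau> c' \<longleftrightarrow> c = c'"
      using \<tau> unfolding bij_betw_def inj_def by auto
    moreover have "(transpose Q ** (B ** Q)) $ c $ c' = u (\<tau> c) \<bullet> (B *v u (\<tau> c'))"
      by (simp add: Q_def matrix_matrix_mult_def matrix_vector_mult_def transpose_def
          inner_vec_def sum_distrib_left mult.assoc)
    ultimately show ?thesis
      using E Bu unfolding ordered_eigenbasis_def by (auto simp: dot_square_norm)
  qed
  then have "det (transpose Q ** (B ** Q)) = (\<Prod>c\<in>UNIV. s - a (\<tau> c))"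
    by (subst det_diagonal) auto
  moreover have "det (transpose Q ** (B ** Q)) = det B"
    using arg_cong[OF QQ, of det] unfolding Q_def by (simp add: det_mul)
  ultimately show ?thesis
    unfolding B_def using prod.reindex_bij_betw[OF \<tau>] by simp
qed

lemma poly_det: "poly (det P) x = det (\<chi> i j. poly (P $ i $ j) x)"
  unfolding det_def by (simp add: poly_sum poly_prod)

lemma charpoly_ordered_eigenbasis:
  fixes A :: "real^'n^'n"
  assumes E: "ordered_eigenbasis A u a"
  shows "charpoly A = (\<Prod>i<CARD('n). [:- a i, 1:])"
proof -
  have "poly (charpoly A) s = poly (\<Prod>i<CARD('n). [:- a i, 1:]) s" for s
  proof -
    have "poly (charpoly A) s = det (s *\<^sub>R mat 1 - A)"
      unfolding charpoly_def poly_det by (rule arg_cong[where f=det]) (simp add: vec_eq_iff mat_def)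
    then show ?thesis
      using ordered_eigenbasis_det[OF E] by (simp add: poly_prod)
  qed
  then show ?thesis using poly_eq_poly_eq_iff by blast
qed

lemma proots_charpoly_ordered_eigenbasis:
  fixes A :: "real^'n^'n"
  assumes E: "ordered_eigenbasis A u a"
  shows "proots (charpoly A) = mset (map a [0..<CARD('n)])"
proof -
  have "proots (charpoly A) = (\<Sum>i<CARD('n). proots [:- a i, 1:])"
    unfolding charpoly_ordered_eigenbasis[OF E] by (rule proots_prod) auto
  also have "\<dots> = (\<Sum>i<CARD('n). {#a i#})" by simp
  also have "(\<Sum>i<m. {#a i#}) = mset (map a [0..<m])" for m
    by (induction m) auto
  finally show ?thesis .
qed

lemma eig_ordered_eigenbasis:
  fixes A :: "real^'n^'n"
  assumes E: "ordered_eigenbasis A u a" and j: "1 \<le> j" "j \<le> CARD('n)"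
  shows "eig A j = a (j - 1)"
proof -
  have "sorted (map a [0..<CARD('n)])"
    using E unfolding ordered_eigenbasis_def sorted_iff_nth_mono by simp
  then have "sorted_list_of_multiset (mset (map a [0..<CARD('n)])) = map a [0..<CARD('n)]"
    by (simp only: sorted_list_of_multiset_mset sorted_sort_id)
  then show ?thesis
    unfolding eig_def proots_charpoly_ordered_eigenbasis[OF E] using j by simp
qed

lemma ordered_eigenbasis_simple_eig:
  fixes A :: "real^'n^'n"
  assumes E: "ordered_eigenbasis A u a" and j: "1 \<le> j" "j \<le> CARD('n)"
    and simple: "simple_eig A j" and i: "i < CARD('n)" "i \<noteq> j - 1"
  shows "a i \<noteq> a (j - 1)"
proof
  assume eq: "a i = a (j - 1)"
  have "count (mset (map a [0..<CARD('n)])) (a (j - 1)) = 1"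
    using simple unfolding simple_eig_def eig_ordered_eigenbasis[OF E j]
      proots_charpoly_ordered_eigenbasis[OF E] .
  then have "card {l. l < CARD('n) \<and> a (j - 1) = map a [0..<CARD('n)] ! l} = 1"
    unfolding count_mset count_list_eq_length_filter length_filter_conv_card by simp
  moreover have "{l. l < CARD('n) \<and> a (j - 1) = map a [0..<CARD('n)] ! l}
      = {l. l < CARD('n) \<and> a (j - 1) = a l}"
    by auto
  moreover have "{i, j - 1} \<subseteq> {l. l < CARD('n) \<and> a (j - 1) = a l}"
    using eq i j by auto
  moreover have "finite {l. l < CARD('n) \<and> a (j - 1) = a l}" by simp
  ultimately have "card {i, j - 1} \<le> 1"
    using card_mono by metis
  then show False using i by simp
qed

section \<open>Perturbation of simple eigenvalues\<close>

lemma norm_matrix_vector_le: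
  fixes A :: "real^'m^'n"
  shows "norm (A *v x) \<le> norm A * norm x"
proof (rule power2_le_imp_le)
  have "((A *v x) $ i)\<^sup>2 \<le> (norm (A $ i))\<^sup>2 * (norm x)\<^sup>2" for i
    using power_mono[OF Cauchy_Schwarz_ineq2[of "A $ i" x] abs_ge_zero, of 2]
    by (simp add: power_mult_distrib matrix_vector_mul_component)
  then have "(\<Sum>i\<in>UNIV. ((A *v x) $ i)\<^sup>2) \<le> (\<Sum>i\<in>UNIV. (norm (A $ i))\<^sup>2) * (norm x)\<^sup>2"
    unfolding sum_distrib_right by (rule sum_mono)
  then show "(norm (A *v x))\<^sup>2 \<le> (norm A * norm x)\<^sup>2"
    unfolding power_mult_distrib power2_norm_eq_inner inner_vec_def[of A] inner_vec_def[of "A *v x"]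
    by (simp add: power2_eq_square)
qed simp

lemma abs_quadratic_form_le:
  fixes D :: "real^'n^'n"
  shows "\<bar>x \<bullet> (D *v x)\<bar> \<le> norm D * (x \<bullet> x)"
proof -
  have "\<bar>x \<bullet> (D *v x)\<bar> \<le> norm x * (norm D * norm x)"
    using Cauchy_Schwarz_ineq2[of x "D *v x"] norm_matrix_vector_le[of D x]
    by (meson mult_left_mono norm_ge_zero order_trans)
  then show ?thesis by (simp add: dot_square_norm power2_eq_square algebra_simps)
qed

lemma ordered_eigenbasis_quadratic_form_le:
  fixes A :: "real^'n^'n"
  assumes A: "symmat A" and E: "ordered_eigenbasis A u a" and J: "J < CARD('n)"
    and orth: "\<And>i. J < i \<Longrightarrow> i < CARD('n) \<Longrightarrow> v \<bullet> u i = 0"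
  shows "v \<bullet> (A *v v) \<le> a J * (v \<bullet> v)"
proof -
  have "v \<bullet> (A *v v) \<le> (\<Sum>i<CARD('n). a J * (v \<bullet> u i)\<^sup>2)"
    unfolding ordered_eigenbasis_quadratic_form[OF A E]
  proof (rule sum_mono)
    fix i assume "i \<in> {..<CARD('n)}"
    then show "a i * (v \<bullet> u i)\<^sup>2 \<le> a J * (v \<bullet> u i)\<^sup>2"
      using E J orth[of i] unfolding ordered_eigenbasis_def
      by (cases "i \<le> J") (simp_all add: mult_right_mono)
  qed
  then show ?thesis
    by (simp add: ordered_eigenbasis_parseval[OF E] sum_distrib_left)
qed

lemma ordered_eigenbasis_quadratic_form_ge:
  fixes A :: "real^'n^'n"
  assumes A: "symmat A" and E: "ordered_eigenbasis A u a"
    and orth: "\<And>i. i < J \<Longrightarrow> v \<bullet> u i = 0"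
  shows "a J * (v \<bullet> v) \<le> v \<bullet> (A *v v)"
proof -
  have "(\<Sum>i<CARD('n). a J * (v \<bullet> u i)\<^sup>2) \<le> v \<bullet> (A *v v)"
    unfolding ordered_eigenbasis_quadratic_form[OF A E]
  proof (rule sum_mono)
    fix i assume "i \<in> {..<CARD('n)}"
    then show "a J * (v \<bullet> u i)\<^sup>2 \<le> a i * (v \<bullet> u i)\<^sup>2"
      using E orth[of i] unfolding ordered_eigenbasis_def
      by (cases "J \<le> i") (simp_all add: mult_right_mono)
  qed
  then show ?thesis
    by (simp add: ordered_eigenbasis_parseval[OF E] sum_distrib_left)
qed

text \<open>Weyl's inequality: count dimensions to find a vector orthogonal to the eigenvectors of \<open>A\<close>
  above index \<open>J\<close> and to those of \<open>B\<close> below it.\<close>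
lemma ordered_eigenbasis_eigenvalue_le:
  fixes A B :: "real^'n^'n"
  assumes A: "symmat A" and B: "symmat B"
    and EA: "ordered_eigenbasis A u a" and EB: "ordered_eigenbasis B w b" and J: "J < CARD('n)"
  shows "b J \<le> a J + norm (B - A)"
proof -
  define S where "S = u ` {Suc J..<CARD('n)} \<union> w ` {..<J}"
  have "card S \<le> card (u ` {Suc J..<CARD('n)}) + card (w ` {..<J})"
    unfolding S_def by (rule card_Un_le)
  also have "\<dots> < CARD('n)"
    using card_image_le[of "{Suc J..<CARD('n)}" u] card_image_le[of "{..<J}" w] J by simp
  finally obtain v where v: "v \<noteq> 0" and vS: "\<And>y. y \<in> S \<Longrightarrow> v \<bullet> y = 0"
    using exists_orthogonal_to_finite[of S] unfolding S_def by blast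
  have "b J * (v \<bullet> v) \<le> v \<bullet> (B *v v)"
    using vS unfolding S_def by (intro ordered_eigenbasis_quadratic_form_ge[OF B EB]) simp
  moreover have "v \<bullet> (A *v v) \<le> a J * (v \<bullet> v)"
    using vS unfolding S_def by (intro ordered_eigenbasis_quadratic_form_le[OF A EA J]) simp
  moreover have "v \<bullet> (B *v v) - v \<bullet> (A *v v) \<le> norm (B - A) * (v \<bullet> v)"
    using abs_quadratic_form_le[of v "B - A"]
    by (simp add: matrix_vector_mult_diff_rdistrib inner_diff_right)
  ultimately have "b J * (v \<bullet> v) \<le> (a J + norm (B - A)) * (v \<bullet> v)"
    by (simp add: algebra_simps)
  then show ?thesis using v by simp
qed

lemma abs_eig_diff_le_norm:
  fixes A B :: "real^'n^'n"
  assumes A: "symmat A" and B: "symmat B" and j: "1 \<le> j" "j \<le> CARD('n)"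
  shows "\<bar>eig B j - eig A j\<bar> \<le> norm (B - A)"
proof -
  obtain u a where EA: "ordered_eigenbasis A u a" using ordered_eigenbasis_exists[OF A] .
  obtain w b where EB: "ordered_eigenbasis B w b" using ordered_eigenbasis_exists[OF B] .
  have "j - 1 < CARD('n)" using j by simp
  then have "b (j - 1) \<le> a (j - 1) + norm (B - A)" "a (j - 1) \<le> b (j - 1) + norm (A - B)"
    using ordered_eigenbasis_eigenvalue_le[OF A B EA EB] ordered_eigenbasis_eigenvalue_le[OF B A EB EA]
    by blast+
  then show ?thesis
    using eig_ordered_eigenbasis[OF EA j] eig_ordered_eigenbasis[OF EB j] norm_minus_commute[of A B]
    by simp
qed

lemma unit_eigvec_eig:
  fixes A :: "real^'n^'n"
  assumes A: "symmat A" and j: "1 \<le> j" "j \<le> CARD('n)"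
  shows "norm (unit_eigvec A (eig A j)) = 1"
    and "A *v unit_eigvec A (eig A j) = eig A j *\<^sub>R unit_eigvec A (eig A j)"
proof -
  obtain u a where E: "ordered_eigenbasis A u a" using ordered_eigenbasis_exists[OF A] .
  have "j - 1 < CARD('n)" using j by simp
  then have "norm (u (j - 1)) = 1 \<and> A *v u (j - 1) = eig A j *\<^sub>R u (j - 1)"
    using E eig_ordered_eigenbasis[OF E j] unfolding ordered_eigenbasis_def by simp
  then have "norm (unit_eigvec A (eig A j)) = 1
      \<and> A *v unit_eigvec A (eig A j) = eig A j *\<^sub>R unit_eigvec A (eig A j)"
    unfolding unit_eigvec_def by (rule someI)
  then show "norm (unit_eigvec A (eig A j)) = 1"
    and "A *v unit_eigvec A (eig A j) = eig A j *\<^sub>R unit_eigvec A (eig A j)"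
    by simp_all
qed

text \<open>A unit eigenvector for a simple eigenvalue \<open>a J\<close> is \<open>\<plusminus>u J\<close>.\<close>
lemma ordered_eigenbasis_simple_eigvec:
  fixes A :: "real^'n^'n"
  assumes A: "symmat A" and E: "ordered_eigenbasis A u a" and J: "J < CARD('n)"
    and simple: "\<And>i. i < CARD('n) \<Longrightarrow> i \<noteq> J \<Longrightarrow> a i \<noteq> a J"
    and x0: "norm x0 = 1" "A *v x0 = a J *\<^sub>R x0"
  shows "(y \<bullet> x0)\<^sup>2 = (y \<bullet> u J)\<^sup>2"
proof -
  have x0u: "x0 \<bullet> u i = 0" if "i < CARD('n)" "i \<noteq> J" for i
  proof -
    have "(A *v x0) \<bullet> u i = a i * (x0 \<bullet> u i)"
      using E that symmat_inner_mult[OF A, of x0 "u i"] unfolding ordered_eigenbasis_def by simp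
    then show ?thesis using x0(2) simple[OF that] by simp
  qed
  have single: "(\<Sum>i<CARD('n). f i) = f J" if "\<And>i. i < CARD('n) \<Longrightarrow> i \<noteq> J \<Longrightarrow> f i = 0"
    for f :: "nat \<Rightarrow> real"
    using sum.mono_neutral_right[of "{..<CARD('n)}" "{J}" f] that J by auto
  have "y \<bullet> x0 = (\<Sum>i<CARD('n). (x0 \<bullet> u i) * (y \<bullet> u i))"
    using arg_cong[OF ordered_eigenbasis_expansion[OF E, of x0], of "inner y"]
    by (simp add: inner_sum_right)
  also have "\<dots> = (x0 \<bullet> u J) * (y \<bullet> u J)"
    using x0u by (intro single) simp
  finally have "y \<bullet> x0 = (x0 \<bullet> u J) * (y \<bullet> u J)" .
  moreover have "(x0 \<bullet> u J)\<^sup>2 = 1"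
    using single[of "\<lambda>i. (x0 \<bullet> u i)\<^sup>2"] ordered_eigenbasis_parseval[OF E, of x0] x0(1) x0u
    by (simp add: dot_square_norm)
  ultimately show ?thesis
    by (simp add: power_mult_distrib)
qed

lemma ordered_eigenbasis_gap_inequality:
  fixes A :: "real^'n^'n"
  assumes A: "symmat A" and E: "ordered_eigenbasis A u a" and J: "J < CARD('n)"
    and gap: "\<And>i. i < CARD('n) \<Longrightarrow> i \<noteq> J \<Longrightarrow> g \<le> \<bar>a i - a J\<bar>" and "0 \<le> g"
    and simple: "\<And>i. i < CARD('n) \<Longrightarrow> i \<noteq> J \<Longrightarrow> a i \<noteq> a J"
    and x0: "norm x0 = 1" "A *v x0 = a J *\<^sub>R x0"
  shows "g\<^sup>2 * (y \<bullet> y - (y \<bullet> x0)\<^sup>2) \<le> (norm (A *v y - a J *\<^sub>R y))\<^sup>2"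
proof -
  have shift: "(A *v y - a J *\<^sub>R y) \<bullet> u i = (a i - a J) * (y \<bullet> u i)" if "i < CARD('n)" for i
    using E that symmat_inner_mult[OF A, of y "u i"] unfolding ordered_eigenbasis_def
    by (simp add: inner_diff_left algebra_simps)
  have "(\<Sum>i<CARD('n). g\<^sup>2 * (y \<bullet> u i)\<^sup>2 - (if i = J then g\<^sup>2 * (y \<bullet> u i)\<^sup>2 else 0))
      \<le> (\<Sum>i<CARD('n). ((A *v y - a J *\<^sub>R y) \<bullet> u i)\<^sup>2)"
  proof (rule sum_mono)
    fix i assume i: "i \<in> {..<CARD('n)}"
    show "g\<^sup>2 * (y \<bullet> u i)\<^sup>2 - (if i = J then g\<^sup>2 * (y \<bullet> u i)\<^sup>2 else 0)
        \<le> ((A *v y - a J *\<^sub>R y) \<bullet> u i)\<^sup>2"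
    proof (cases "i = J")
      case False
      then have "g\<^sup>2 \<le> (a i - a J)\<^sup>2"
        using gap i \<open>0 \<le> g\<close> by (metis lessThan_iff power2_abs power_mono)
      then show ?thesis
        using False i shift by (simp add: power_mult_distrib mult_right_mono)
    qed simp
  qed
  then show ?thesis
    using J ordered_eigenbasis_simple_eigvec[OF A E J simple x0] ordered_eigenbasis_parseval[OF E, of y]
      ordered_eigenbasis_parseval[OF E, of "A *v y - a J *\<^sub>R y"]
    by (simp add: sum_subtractf sum_distrib_left dot_square_norm algebra_simps)
qed

lemma simple_eig_spectral_gap:
  fixes A :: "real^'n^'n"
  assumes A: "symmat A" and j: "1 \<le> j" "j \<le> CARD('n)" and simple: "simple_eig A j"
  shows "\<exists>g>0. \<forall>y. g\<^sup>2 * (y \<bullet> y - (y \<bullet> unit_eigvec A (eig A j))\<^sup>2)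
    \<le> (norm (A *v y - eig A j *\<^sub>R y))\<^sup>2"
proof -
  obtain u a where E: "ordered_eigenbasis A u a" using ordered_eigenbasis_exists[OF A] .
  define J where "J = j - 1"
  have J: "J < CARD('n)" and eig: "eig A j = a J"
    using j eig_ordered_eigenbasis[OF E j] unfolding J_def by simp_all
  have distinct: "a i \<noteq> a J" if "i < CARD('n)" "i \<noteq> J" for i
    using ordered_eigenbasis_simple_eig[OF E j simple that(1)] that(2) unfolding J_def by simp
  define g where "g = Min (insert 1 ((\<lambda>i. \<bar>a i - a J\<bar>) ` {i. i < CARD('n) \<and> i \<noteq> J}))"
  have "g > 0"
    unfolding g_def using distinct by (subst Min_gr_iff) auto
  moreover have "g \<le> \<bar>a i - a J\<bar>" if "i < CARD('n)" "i \<noteq> J" for i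
    unfolding g_def using that by (intro Min_le) auto
  ultimately show ?thesis
    using ordered_eigenbasis_gap_inequality[OF A E J _ _ distinct] unit_eigvec_eig[OF A j]
    unfolding eig by (meson less_imp_le)
qed

text \<open>A Davis--Kahan type estimate; the sign condition on \<open>v \<bullet> x0\<close> selects the eigenvector
  of \<open>B\<close> that is close to \<open>x0\<close> rather than to \<open>-x0\<close>.\<close>
lemma unit_eigvec_perturbation:
  fixes A B :: "real^'n^'n"
  assumes gap: "\<And>y. g\<^sup>2 * (y \<bullet> y - (y \<bullet> x0)\<^sup>2) \<le> (norm (A *v y - l0 *\<^sub>R y))\<^sup>2" and "g > 0"
    and x0: "norm x0 = 1" and v: "norm v = 1" "B *v v = l *\<^sub>R v"
    and l: "\<bar>l - l0\<bar> \<le> norm (B - A)" and sign: "0 \<le> v \<bullet> x0"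
  shows "norm (v - x0) \<le> 3 * norm (B - A) / g"
proof (rule power2_le_imp_le)
  define K where "K = norm (B - A)"
  define c where "c = v \<bullet> x0"
  have "A *v v - l0 *\<^sub>R v = (A - B) *v v + (l - l0) *\<^sub>R v"
    using v(2) by (simp add: matrix_vector_mult_diff_rdistrib scaleR_diff_left)
  then have "norm (A *v v - l0 *\<^sub>R v) \<le> norm ((A - B) *v v) + norm ((l - l0) *\<^sub>R v)"
    by (metis norm_triangle_ineq)
  also have "\<dots> \<le> 2 * K"
    using norm_matrix_vector_le[of "A - B" v] v(1) l unfolding K_def
    by (simp add: norm_minus_commute)
  finally have "(norm (A *v v - l0 *\<^sub>R v))\<^sup>2 \<le> (2 * K)\<^sup>2"
    by (rule power_mono) simp
  with gap[of v] have "g\<^sup>2 * (1 - c\<^sup>2) \<le> 4 * K\<^sup>2"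
    using v(1) unfolding c_def by (simp add: dot_square_norm power_mult_distrib)
  moreover have "c \<le> 1"
    using Cauchy_Schwarz_ineq2[of v x0] v(1) x0 unfolding c_def by simp
  then have "g\<^sup>2 * (1 - c) \<le> g\<^sup>2 * (1 - c\<^sup>2)"
    using sign unfolding c_def power2_eq_square by (intro mult_left_mono) (simp_all add: mult_left_le)
  ultimately have bound: "g\<^sup>2 * (1 - c) \<le> 4 * K\<^sup>2" by linarith
  have dist: "(norm (v - x0))\<^sup>2 = 2 * (1 - c)"
  proof -
    have "v \<bullet> v = 1" "x0 \<bullet> x0 = 1" using v(1) x0 by (simp_all add: dot_square_norm)
    then show ?thesis
      unfolding c_def power2_norm_eq_inner by (simp add: inner_diff_left inner_diff_right inner_commute)
  qed
  have "g\<^sup>2 * (norm (v - x0))\<^sup>2 = 2 * (g\<^sup>2 * (1 - c))"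
    unfolding dist by (rule mult.left_commute)
  also have "\<dots> \<le> 9 * K\<^sup>2"
    using bound zero_le_power2[of K] by linarith
  also have "\<dots> = g\<^sup>2 * (3 * K / g)\<^sup>2"
    using \<open>g > 0\<close> by (simp add: power_divide power_mult_distrib)
  finally show "(norm (v - x0))\<^sup>2 \<le> (3 * norm (B - A) / g)\<^sup>2"
    using \<open>g > 0\<close> unfolding K_def by simp
qed (use \<open>g > 0\<close> in simp)

lemma simple_eig_eigvec_tendsto:
  fixes M :: "'a \<Rightarrow> real^'n^'n"
  assumes lim: "(M \<longlongrightarrow> A) F" and A: "symmat A" and sym: "eventually (\<lambda>t. symmat (M t)) F"
    and j: "1 \<le> j" "j \<le> CARD('n)" and simple: "simple_eig A j"
  obtains xs where "eventually (\<lambda>t. norm (xs t) = 1 \<and> M t *v xs t = eig (M t) j *\<^sub>R xs t) F"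
    "(xs \<longlongrightarrow> unit_eigvec A (eig A j)) F"
proof -
  define x0 where "x0 = unit_eigvec A (eig A j)"
  obtain g where "g > 0"
    and gap: "\<forall>y. g\<^sup>2 * (y \<bullet> y - (y \<bullet> x0)\<^sup>2) \<le> (norm (A *v y - eig A j *\<^sub>R y))\<^sup>2"
    using simple_eig_spectral_gap[OF A j simple, folded x0_def] by blast
  define xs where "xs t = (let y = unit_eigvec (M t) (eig (M t) j) in if 0 \<le> y \<bullet> x0 then y else - y)" for t
  have "eventually (\<lambda>t. norm (xs t) = 1 \<and> M t *v xs t = eig (M t) j *\<^sub>R xs t
      \<and> norm (xs t - x0) \<le> 3 * norm (M t - A) / g) F"
    using sym
  proof (rule eventually_mono)
    fix t assume Mt: "symmat (M t)"
    define y where "y = unit_eigvec (M t) (eig (M t) j)"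
    have "norm y = 1" "M t *v y = eig (M t) j *\<^sub>R y"
      using unit_eigvec_eig[OF Mt j] unfolding y_def by simp_all
    moreover have "M t *v (- y) = - (M t *v y)"
      using matrix_vector_mult_scaleR[of "M t" "-1" y] by simp
    ultimately have xs: "norm (xs t) = 1" "M t *v xs t = eig (M t) j *\<^sub>R xs t" "0 \<le> xs t \<bullet> x0"
      unfolding xs_def y_def[symmetric] Let_def by (simp_all split: if_split)
    moreover have "norm (xs t - x0) \<le> 3 * norm (M t - A) / g"
      by (rule unit_eigvec_perturbation[OF gap[rule_format] \<open>g > 0\<close> _ xs(1,2) abs_eig_diff_le_norm[OF A Mt j] xs(3)])
        (use unit_eigvec_eig[OF A j] in \<open>simp add: x0_def\<close>)
    ultimately show "norm (xs t) = 1 \<and> M t *v xs t = eig (M t) j *\<^sub>R xs t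
      \<and> norm (xs t - x0) \<le> 3 * norm (M t - A) / g" by blast
  qed
  note ev = this
  have "((\<lambda>t. 3 * norm (M t - A) / g) \<longlongrightarrow> 0) F"
    using tendsto_mult_left[OF tendsto_norm_zero[OF LIM_zero[OF lim]], of "3 / g"] by simp
  moreover have "eventually (\<lambda>t. norm (xs t - x0) \<le> 3 * norm (M t - A) / g) F"
    using ev by eventually_elim blast
  ultimately have "(xs \<longlongrightarrow> x0) F"
    by (auto intro: LIM_zero_cancel Lim_null_comparison)
  moreover have "eventually (\<lambda>t. norm (xs t) = 1 \<and> M t *v xs t = eig (M t) j *\<^sub>R xs t) F"
    using ev by eventually_elim blast
  ultimately show ?thesis
    by (intro that[folded x0_def])
qed

lemma tendsto_matrix_vector_mult:
  fixes A :: "'a \<Rightarrow> real^'n^'m"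
  assumes "(A \<longlongrightarrow> A0) F" "(x \<longlongrightarrow> x0) F"
  shows "((\<lambda>t. A t *v x t) \<longlongrightarrow> A0 *v x0) F"
  unfolding matrix_vector_mult_def by (intro tendsto_intros assms)

lemma has_vector_derivative_quotient_tendsto:
  fixes f :: "real \<Rightarrow> 'a::real_normed_vector"
  assumes "(f has_vector_derivative f') (at t0)"
  shows "((\<lambda>t. (f t - f t0) /\<^sub>R (t - t0)) \<longlongrightarrow> f') (at t0)"
proof -
  have "(f has_derivative (\<lambda>h. h *\<^sub>R f')) (at t0)"
    using assms unfolding has_vector_derivative_def .
  then have lim: "((\<lambda>t. ((f t - f t0) - (t - t0) *\<^sub>R f') /\<^sub>R norm (t - t0)) \<longlongrightarrow> 0) (at t0)"
    unfolding has_derivative_at_within by blast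
  have "norm ((f t - f t0) /\<^sub>R (t - t0) - f')
      \<le> norm (((f t - f t0) - (t - t0) *\<^sub>R f') /\<^sub>R norm (t - t0))" if "t \<noteq> t0" for t
  proof -
    have "(f t - f t0) /\<^sub>R (t - t0) - f' = ((f t - f t0) - (t - t0) *\<^sub>R f') /\<^sub>R (t - t0)"
      using that by (simp add: scaleR_diff_right)
    then show ?thesis by simp
  qed
  then have "eventually (\<lambda>t. norm ((f t - f t0) /\<^sub>R (t - t0) - f')
      \<le> norm (((f t - f t0) - (t - t0) *\<^sub>R f') /\<^sub>R norm (t - t0))) (at t0)"
    unfolding eventually_at_filter by simp
  from Lim_null_comparison[OF this tendsto_norm_zero[OF lim]] show ?thesis
    by (rule LIM_zero_cancel)
qed

text \<open>With \<open>x(t)\<close> a continuous choice of unit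
  eigenvectors, \<open>(\<lambda>(t) - \<lambda>(t0)) (x(t) \<bullet> x0) = x0 \<bullet> ((M t - M t0) x(t))\<close> by symmetry of \<open>M t0\<close>.\<close>
lemma simple_eig_has_real_derivative:
  fixes M :: "real \<Rightarrow> real^'n^'n"
  assumes dM: "(M has_vector_derivative M') (at t0)"
    and sym: "eventually (\<lambda>t. symmat (M t)) (nhds t0)"
    and j: "1 \<le> j" "j \<le> CARD('n)" and simple: "simple_eig (M t0) j"
  shows "((\<lambda>t. eig (M t) j) has_real_derivative
     unit_eigvec (M t0) (eig (M t0) j) \<bullet> (M' *v unit_eigvec (M t0) (eig (M t0) j))) (at t0)"
proof -
  define A where "A = M t0"
  define x0 where "x0 = unit_eigvec A (eig A j)"
  have A: "symmat A" using sym unfolding A_def by (rule eventually_nhds_x_imp_x)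
  have x0: "norm x0 = 1" "A *v x0 = eig A j *\<^sub>R x0"
    using unit_eigvec_eig[OF A j] unfolding x0_def by simp_all
  have sym_at: "eventually (\<lambda>t. symmat (M t)) (at t0)"
    using sym unfolding eventually_at_filter by (rule eventually_mono) simp
  have "(M \<longlongrightarrow> A) (at t0)"
    using has_vector_derivative_continuous[OF dM] unfolding continuous_at A_def .
  then obtain xs where xs: "eventually (\<lambda>t. norm (xs t) = 1 \<and> M t *v xs t = eig (M t) j *\<^sub>R xs t) (at t0)"
    and xs_lim: "(xs \<longlongrightarrow> x0) (at t0)"
    using simple_eig_eigvec_tendsto[OF _ A sym_at j simple[folded A_def]] unfolding x0_def by blast
  have c_lim: "((\<lambda>t. xs t \<bullet> x0) \<longlongrightarrow> 1) (at t0)"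
    using tendsto_inner[OF xs_lim tendsto_const, of x0] x0(1) by (simp add: dot_square_norm)
  have "eventually (\<lambda>t. (eig (M t) j - eig A j) / (t - t0)
      = x0 \<bullet> (((M t - A) /\<^sub>R (t - t0)) *v xs t) / (xs t \<bullet> x0)) (at t0)"
    using xs order_tendstoD(1)[OF c_lim zero_less_one] eventually_neq_at_within[of t0 t0]
  proof eventually_elim
    case (elim t)
    have "x0 \<bullet> (A *v xs t) = eig A j * (xs t \<bullet> x0)"
      using symmat_inner_mult[OF A, of x0 "xs t"] x0(2) by (simp add: inner_commute)
    then have "x0 \<bullet> ((M t - A) *v xs t) = (eig (M t) j - eig A j) * (xs t \<bullet> x0)"
      using elim by (simp add: matrix_vector_mult_diff_rdistrib inner_diff_right algebra_simps inner_commute)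
    moreover have "x0 \<bullet> (((M t - A) /\<^sub>R (t - t0)) *v xs t) = x0 \<bullet> ((M t - A) *v xs t) / (t - t0)"
      by (simp add: scaleR_matrix_vector_assoc[symmetric] divide_inverse mult.commute)
    ultimately show ?case
      using elim by (simp add: field_simps)
  qed
  moreover have "((\<lambda>t. x0 \<bullet> (((M t - A) /\<^sub>R (t - t0)) *v xs t) / (xs t \<bullet> x0)) \<longlongrightarrow> x0 \<bullet> (M' *v x0) / 1) (at t0)"
    using has_vector_derivative_quotient_tendsto[OF dM] xs_lim c_lim unfolding A_def
    by (intro tendsto_intros tendsto_matrix_vector_mult) simp_all
  ultimately show ?thesis
    unfolding has_field_derivative_iff A_def x0_def by (simp add: tendsto_cong)
qed

section \<open>The penalised eigenvalue gap along a curve\<close>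

lemma lap_add: "lap (A + B) = lap A + lap B"
  unfolding lap_def by (simp add: vec_eq_iff sum.distrib)

lemma lap_scaleR: "lap (c *\<^sub>R A) = c *\<^sub>R lap A"
  unfolding lap_def by (simp add: vec_eq_iff sum_distrib_left algebra_simps)

lemma bounded_linear_lap: "bounded_linear (lap :: real^'n^'n \<Rightarrow> real^'n^'n)"
  by (simp add: linear_conv_bounded_linear[symmetric] linearI lap_add lap_scaleR)

lemma symmat_lap: "symmat A \<Longrightarrow> symmat (lap A)"
  by (rule symmatI) (simp add: lap_def symmat_entry)

lemma inner_matrix: "inner (X :: real^'n^'m) Y = (\<Sum>i\<in>UNIV. \<Sum>j\<in>UNIV. X $ i $ j * Y $ i $ j)"
  by (simp add: inner_vec_def)

text \<open>This is \<open>x\<^sup>T L(B) x = \<Sum>\<^sub>i\<^sub>j B\<^sub>i\<^sub>j (x\<^sub>i - x\<^sub>j)\<^sup>2 / 2\<close>, expanded to match the entries of \<open>R\<^sub>\<epsilon>\<close>.\<close>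
lemma lap_quadratic_form:
  fixes B :: "real^'n^'n"
  assumes B: "symmat B"
  shows "x \<bullet> (lap B *v x) = (\<Sum>i\<in>UNIV. \<Sum>j\<in>UNIV. ((x$i * x$i + x$j * x$j) / 2 - x$i * x$j) * B$i$j)"
proof -
  have row: "(lap B *v x) $ i = (\<Sum>j\<in>UNIV. B$i$j) * x$i - (\<Sum>j\<in>UNIV. B$i$j * x$j)" for i
  proof -
    have "(lap B *v x) $ i
        = (\<Sum>j\<in>UNIV. (if i = j then (\<Sum>l\<in>UNIV. B$i$l) else 0) * x$j) - (\<Sum>j\<in>UNIV. B$i$j * x$j)"
      by (simp add: lap_def matrix_vector_mult_def left_diff_distrib sum_subtractf)
    then show ?thesis
      by (simp add: if_distrib[of "\<lambda>t. t * _"] cong: if_cong)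
  qed
  have swap: "(\<Sum>i\<in>UNIV. \<Sum>j\<in>UNIV. x$j * x$j * B$i$j) = (\<Sum>i\<in>UNIV. \<Sum>j\<in>UNIV. x$i * x$i * B$i$j)"
    using sum.swap[of "\<lambda>i j. x$j * x$j * B$i$j"] symmat_entry[OF B] by simp
  have "x \<bullet> (lap B *v x)
      = (\<Sum>i\<in>UNIV. \<Sum>j\<in>UNIV. x$i * x$i * B$i$j) - (\<Sum>i\<in>UNIV. \<Sum>j\<in>UNIV. x$i * x$j * B$i$j)"
    by (simp add: inner_vec_def row right_diff_distrib sum_subtractf sum_distrib_left algebra_simps)
  also have "\<dots> = (\<Sum>i\<in>UNIV. \<Sum>j\<in>UNIV. x$i * x$i * B$i$j) / 2
      + (\<Sum>i\<in>UNIV. \<Sum>j\<in>UNIV. x$j * x$j * B$i$j) / 2 - (\<Sum>i\<in>UNIV. \<Sum>j\<in>UNIV. x$i * x$j * B$i$j)"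
    unfolding swap by simp
  also have "\<dots> = (\<Sum>i\<in>UNIV. \<Sum>j\<in>UNIV. ((x$i * x$i + x$j * x$j) / 2 - x$i * x$j) * B$i$j)"
    by (simp add: sum_subtractf sum.distrib sum_divide_distrib algebra_simps add_divide_distrib)
  finally show ?thesis .
qed

lemma inner_Rmat:
  fixes B W E :: "real^'n^'n" and eps :: real
  assumes B: "symmat B"
  defines "M \<equiv> lap (W + eps *\<^sub>R E)"
  shows "inner (Rmat W k eps E) B
    = unit_eigvec M (eig M (k + 1)) \<bullet> (lap B *v unit_eigvec M (eig M (k + 1)))
      - unit_eigvec M (eig M k) \<bullet> (lap B *v unit_eigvec M (eig M k))"
  unfolding Rmat_def Let_def M_def[symmetric] lap_quadratic_form[OF B] inner_matrix ones_def
  by (simp add: sum_subtractf[symmetric] algebra_simps add_divide_distrib diff_divide_distrib)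

lemma inner_projS:
  assumes "\<And>i j. (i, j) \<notin> Ed \<Longrightarrow> B $ i $ j = 0"
  shows "inner (projS Ed R) B = inner R B"
  unfolding inner_matrix projS_def using assms by (intro sum.cong refl) auto

lemma subspace_patt: "subspace (patt Ed)"
  unfolding subspace_def patt_def by (auto intro!: symmatI simp: symmat_entry)

lemma has_vector_derivative_in_subspace:
  fixes f :: "real \<Rightarrow> 'a::euclidean_space"
  assumes f: "(f has_vector_derivative f') (at t0)" and S: "subspace S"
    and ev: "eventually (\<lambda>t. f t \<in> S) (nhds t0)"
  shows "f' \<in> S"
proof (rule Lim_in_closed_set[OF closed_subspace[OF S] _ at_neq_bot
      has_vector_derivative_quotient_tendsto[OF f]])
  have "f t0 \<in> S" using ev by (rule eventually_nhds_x_imp_x)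
  with ev have "eventually (\<lambda>t. (f t - f t0) /\<^sub>R (t - t0) \<in> S) (nhds t0)"
    by (auto elim!: eventually_mono intro: subspace_scale subspace_diff S)
  then show "eventually (\<lambda>t. (f t - f t0) /\<^sub>R (t - t0) \<in> S) (at t0)"
    unfolding eventually_at_filter by (rule eventually_mono) simp
qed

lemma has_vector_derivative_unit_orthogonal:
  fixes f :: "real \<Rightarrow> 'a::real_inner"
  assumes f: "(f has_vector_derivative f') (at t0)"
    and ev: "eventually (\<lambda>t. norm (f t) = 1) (nhds t0)"
  shows "inner (f t0) f' = 0"
proof -
  have "((\<lambda>t. inner (f t) (f t)) has_real_derivative inner (f t0) f' + inner f' (f t0)) (at t0)"
    using bounded_bilinear.has_vector_derivative[OF bounded_bilinear_inner f f]
    by (simp add: has_real_derivative_iff_has_vector_derivative)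
  moreover have "eventually (\<lambda>t. inner (f t) (f t) = 1) (nhds t0)"
    using ev by (rule eventually_mono) (simp add: dot_square_norm)
  ultimately have "((\<lambda>t. 1) has_real_derivative inner (f t0) f' + inner f' (f t0)) (at t0)"
    using DERIV_cong_ev[OF refl _ refl, of "\<lambda>t. inner (f t) (f t)" "\<lambda>t. 1"] by simp
  then have "inner (f t0) f' + inner f' (f t0) = 0"
    using DERIV_const DERIV_unique by blast
  then show ?thesis by (simp add: inner_commute)
qed

lemma has_vector_derivative_matrix_entry:
  fixes X :: "real \<Rightarrow> real^'n^'m"
  assumes "(X has_vector_derivative X') (at t0)"
  shows "((\<lambda>t. X t $ i $ j) has_real_derivative X' $ i $ j) (at t0)"
  using bounded_linear.has_vector_derivative[OF
      bounded_linear_compose[OF bounded_linear_vec_nth bounded_linear_vec_nth] assms]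
  unfolding has_real_derivative_iff_has_vector_derivative .

lemma min0_square_has_real_derivative:
  "((\<lambda>s. (min s 0)\<^sup>2) has_real_derivative 2 * min x (0::real)) (at x)"
proof (cases x "0::real" rule: linorder_cases)
  case less
  have "eventually (\<lambda>s. (min s 0)\<^sup>2 = s\<^sup>2) (nhds x)"
    using eventually_nhds_in_open[of "{..<0}" x] less by (auto elim: eventually_mono)
  moreover have "((\<lambda>s. s\<^sup>2) has_real_derivative 2 * x) (at x)"
    using DERIV_pow[of 2 x] by simp
  ultimately show ?thesis
    using DERIV_cong_ev[OF refl _ refl] less by fastforce
next
  case greater
  have "eventually (\<lambda>s. (min s 0)\<^sup>2 = 0) (nhds x)"
    using eventually_nhds_in_open[of "{0<..}" x] greater by (auto elim: eventually_mono)
  then show ?thesis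
    using DERIV_cong_ev[OF refl _ refl] DERIV_const[of 0 "at x"] greater by fastforce
next
  case equal
  have "((\<lambda>y. min y (0::real)) \<longlongrightarrow> min 0 0) (at 0)"
    by (intro tendsto_intros)
  moreover have "eventually (\<lambda>y. min y 0 = ((min y 0)\<^sup>2 - (min 0 0)\<^sup>2) / (y - 0)) (at (0::real))"
    unfolding eventually_at_filter
    by (rule always_eventually) (auto simp: power2_eq_square min_def)
  ultimately have "((\<lambda>y. ((min y 0)\<^sup>2 - (min 0 0)\<^sup>2) / (y - 0)) \<longlongrightarrow> (0::real)) (at 0)"
    using Lim_transform_eventually by fastforce
  then show ?thesis unfolding equal has_field_derivative_iff by simp
qed

lemma penalty_has_real_derivative:
  fixes X :: "real \<Rightarrow> real^'n^'n"
  assumes X: "(X has_vector_derivative B) (at t0)" and B: "\<And>i j. (i, j) \<notin> Ed \<Longrightarrow> B $ i $ j = 0"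
  shows "((\<lambda>t. (1/2) * (\<Sum>(i, j)\<in>Ed. (min (X t $ i $ j) 0)\<^sup>2)) has_real_derivative
      inner (\<chi> i j. min (X t0 $ i $ j) 0) B) (at t0)"
proof -
  have "((\<lambda>t. (1/2) * (\<Sum>(i, j)\<in>Ed. (min (X t $ i $ j) 0)\<^sup>2)) has_real_derivative
      (1/2) * (\<Sum>(i, j)\<in>Ed. 2 * min (X t0 $ i $ j) 0 * B $ i $ j)) (at t0)"
    unfolding case_prod_beta
    by (intro DERIV_cmult DERIV_sum DERIV_chain2[OF min0_square_has_real_derivative]
        has_vector_derivative_matrix_entry X)
  moreover have "inner (\<chi> i j. min (X t0 $ i $ j) 0) B = (\<Sum>(i, j)\<in>Ed. min (X t0 $ i $ j) 0 * B $ i $ j)"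
  proof -
    have "inner (\<chi> i j. min (X t0 $ i $ j) 0) B = (\<Sum>(i, j)\<in>UNIV. min (X t0 $ i $ j) 0 * B $ i $ j)"
      unfolding inner_matrix by (simp add: sum.cartesian_product)
    also have "\<dots> = (\<Sum>(i, j)\<in>Ed. min (X t0 $ i $ j) 0 * B $ i $ j)"
      using B by (intro sum.mono_neutral_right) auto
    finally show ?thesis .
  qed
  ultimately show ?thesis
    by (simp add: sum_distrib_left case_prod_beta mult.assoc)
qed

lemma patt1_curve_velocity:
  fixes Es :: "real \<Rightarrow> real^'n^'n"
  assumes Es: "(Es has_vector_derivative E') (at eps)"
    and near: "eventually (\<lambda>t. Es t \<in> patt1 Ed) (nhds eps)"
  shows "E' \<in> patt Ed" and "inner (Es eps) E' = 0"
  using near unfolding patt1_def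
  by (auto elim!: eventually_mono
      intro: has_vector_derivative_in_subspace[OF Es subspace_patt] has_vector_derivative_unit_orthogonal[OF Es])

text \<open>Chain rule for \<open>F\<^sub>\<epsilon>\<^sub>,\<^sub>c\<close> along a curve \<open>\<epsilon> \<mapsto> E(\<epsilon>)\<close>: the perturbation \<open>\<epsilon> E(\<epsilon>)\<close> has velocity
  \<open>E + \<epsilon> E'\<close>, and \<open>G\<^sub>\<epsilon>\<^sub>,\<^sub>c\<close> is the gradient of \<open>F\<^sub>\<epsilon>\<^sub>,\<^sub>c\<close> with respect to that perturbation.\<close>
lemma Fepsc_curve_has_real_derivative:
  fixes Es :: "real \<Rightarrow> real^'n^'n"
  assumes Es: "(Es has_vector_derivative E') (at eps)"
    and sym: "eventually (\<lambda>t. symmat (W + t *\<^sub>R Es t)) (nhds eps)"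
    and B: "Es eps + eps *\<^sub>R E' \<in> patt Ed"
    and k: "1 \<le> k" "k + 1 \<le> CARD('n)"
    and simple: "simple_eig (lap (W + eps *\<^sub>R Es eps)) k" "simple_eig (lap (W + eps *\<^sub>R Es eps)) (k + 1)"
  shows "((\<lambda>t. Fepsc Ed W k t c (Es t)) has_real_derivative
    inner (Gepsc Ed W k eps c (Es eps)) (Es eps + eps *\<^sub>R E')) (at eps)"
proof -
  define B where "B = Es eps + eps *\<^sub>R E'"
  define X where "X t = W + t *\<^sub>R Es t" for t
  define x where "x = unit_eigvec (lap (X eps)) (eig (lap (X eps)) (k + 1))"
  define y where "y = unit_eigvec (lap (X eps)) (eig (lap (X eps)) k)"
  have symB: "symmat B" and pattB: "\<And>i j. (i, j) \<notin> Ed \<Longrightarrow> B $ i $ j = 0"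
    using B unfolding B_def patt_def by auto
  have "(X has_vector_derivative 0 + (eps *\<^sub>R E' + 1 *\<^sub>R Es eps)) (at eps)"
    unfolding X_def by (intro derivative_intros Es)
  then have X: "(X has_vector_derivative B) (at eps)"
    unfolding B_def by (simp add: add.commute)
  have M: "((\<lambda>t. lap (X t)) has_vector_derivative lap B) (at eps)"
    by (rule bounded_linear.has_vector_derivative[OF bounded_linear_lap X])
  have symM: "eventually (\<lambda>t. symmat (lap (X t))) (nhds eps)"
    using sym unfolding X_def by (rule eventually_mono) (rule symmat_lap)
  have simpleX: "simple_eig (lap (X eps)) k" "simple_eig (lap (X eps)) (k + 1)"
    using simple unfolding X_def .
  have "((\<lambda>t. eig (lap (X t)) (k + 1) - eig (lap (X t)) k
      + c * ((1/2) * (\<Sum>(i, j)\<in>Ed. (min (X t $ i $ j) 0)\<^sup>2))) has_real_derivative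
      x \<bullet> (lap B *v x) - y \<bullet> (lap B *v y) + c * inner (\<chi> i j. min (X eps $ i $ j) 0) B) (at eps)"
    unfolding x_def y_def using k
    by (intro DERIV_add DERIV_diff DERIV_cmult penalty_has_real_derivative[OF X pattB]
        simple_eig_has_real_derivative[OF M symM] simpleX) simp_all
  moreover have "(\<lambda>t. Fepsc Ed W k t c (Es t)) = (\<lambda>t. eig (lap (X t)) (k + 1) - eig (lap (X t)) k
      + c * ((1/2) * (\<Sum>(i, j)\<in>Ed. (min (X t $ i $ j) 0)\<^sup>2)))"
    unfolding Fepsc_def Feps_def Qeps_def X_def by simp
  moreover have "inner (Gepsc Ed W k eps c (Es eps)) B
      = x \<bullet> (lap B *v x) - y \<bullet> (lap B *v y) + c * inner (\<chi> i j. min (X eps $ i $ j) 0) B"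
    unfolding Gepsc_def Geps_def x_def y_def X_def
    by (simp add: inner_add_left inner_projS[OF pattB] inner_Rmat[OF symB])
  ultimately show ?thesis unfolding B_def by simp
qed

theorem lemma5p2:
  fixes Ed :: "('n::finite \<times> 'n) set"
    and W :: "real ^ 'n ^ 'n"
    and k :: nat and c :: real
    and Es :: "real \<Rightarrow> real ^ 'n ^ 'n"
    and I :: "real set"
  assumes Ed_sym: "sym Ed"
    and W_sym: "symmat W"
    and W_nonneg: "\<forall>i j. 0 \<le> W $ i $ j"
    and W_patt: "\<forall>i j. (i, j) \<notin> Ed \<longrightarrow> W $ i $ j = 0"
    and k_lo: "2 \<le> k" and k_hi: "k \<le> CARD('n) - 1"
    and c_pos: "c > 0"
    and I_open: "open I" and I_int: "is_interval I" and I_pos: "I \<subseteq> {0<..}"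
    and Es_diff: "Es differentiable_on I"
    and Es_in: "\<forall>eps\<in>I. Es eps \<in> patt1 Ed"
    and Es_min: "\<forall>eps\<in>I. \<forall>E\<in>patt1 Ed. Fepsc Ed W k eps c (Es eps) \<le> Fepsc Ed W k eps c E"
    and Es_simple: "\<forall>eps\<in>I. simple_eig (lap (W + eps *\<^sub>R Es eps)) k
                          \<and> simple_eig (lap (W + eps *\<^sub>R Es eps)) (k + 1)"
    and Es_neg: "\<forall>eps\<in>I. \<exists>mu<0. Gepsc Ed W k eps c (Es eps) = mu *\<^sub>R Es eps"
  shows "\<forall>eps\<in>I.
           ((\<lambda>t. Fepsc Ed W k t c (Es t)) has_real_derivative
               inner (Gepsc Ed W k eps c (Es eps)) (Es eps)) (at eps)
         \<and> inner (Gepsc Ed W k eps c (Es eps)) (Es eps) = - norm (Gepsc Ed W k eps c (Es eps))"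
proof
  fix eps assume eps: "eps \<in> I"
  have near: "eventually (\<lambda>t. Es t \<in> patt1 Ed) (nhds eps)"
    using eventually_nhds_in_open[OF I_open eps] Es_in by (auto elim: eventually_mono)
  have E0: "Es eps \<in> patt Ed" "norm (Es eps) = 1"
    using Es_in eps unfolding patt1_def by auto
  obtain E' where Es': "(Es has_vector_derivative E') (at eps)"
    using Es_diff eps at_within_open[OF eps I_open]
    by (metis differentiable_on_def vector_derivative_works)
  have B: "Es eps + eps *\<^sub>R E' \<in> patt Ed"
    using E0 patt1_curve_velocity(1)[OF Es' near]
    by (intro subspace_add[OF subspace_patt] subspace_scale[OF subspace_patt])
  have sym: "eventually (\<lambda>t. symmat (W + t *\<^sub>R Es t)) (nhds eps)"
    using near by (rule eventually_mono)
      (auto intro!: symmatI simp: patt1_def patt_def symmat_entry[OF W_sym] symmat_entry)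
  obtain mu where "mu < 0" and G: "Gepsc Ed W k eps c (Es eps) = mu *\<^sub>R Es eps"
    using Es_neg eps by blast
  have "((\<lambda>t. Fepsc Ed W k t c (Es t)) has_real_derivative
      inner (Gepsc Ed W k eps c (Es eps)) (Es eps + eps *\<^sub>R E')) (at eps)"
    using Es_simple eps k_lo k_hi by (intro Fepsc_curve_has_real_derivative[OF Es' sym B]) auto
  moreover have "inner (Gepsc Ed W k eps c (Es eps)) (Es eps + eps *\<^sub>R E')
      = inner (Gepsc Ed W k eps c (Es eps)) (Es eps)"
    using G patt1_curve_velocity(2)[OF Es' near] by (simp add: inner_add_right)
  moreover have "inner (Gepsc Ed W k eps c (Es eps)) (Es eps) = - norm (Gepsc Ed W k eps c (Es eps))"
    using G \<open>mu < 0\<close> E0 by (simp add: dot_square_norm)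
  ultimately show "((\<lambda>t. Fepsc Ed W k t c (Es t)) has_real_derivative
               inner (Gepsc Ed W k eps c (Es eps)) (Es eps)) (at eps)
         \<and> inner (Gepsc Ed W k eps c (Es eps)) (Es eps) = - norm (Gepsc Ed W k eps c (Es eps))"
    by simp
qed

end
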